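(* Let $C\subseteq\mathbb{R}^2$ be a strictly convex closed differentiable curve, and let $h\colon C\to C$ be the map sending $p\in C$ to the unique point of intersection of the normal line to $C$ at $p$ with $C\setminus\{p\}$. Then $h$ has degree one; in particular $h$ is surjective.
   Context: A curve $C\subseteq\mathbb{R}^2$ is strictly convex if $C=\partial Y$ for some $Y\subseteq\mathbb{R}^2$ such that $ty+(1-t)y'$ lies in the interior of $Y$ for all $y,y'\in Y$, $t\in(0,1)$. The normal line at $p$ is the line through $p$ perpendicular to the tangent line of $C$ at $p$; the map $h$ is continuous. *)

theory Defs
  imports "HOL-Analysis.Analysis" "HOL-Homology.Homology"
begin

text \<open>The degree is independent of the
  chosen homeomorphism; we require C to be a topological circle and the value to
  be d for every such homeomorphism.\<close>
definition circle_map_degree :: "'a::topological_space set \<Rightarrow> ('a \<Rightarrow> 'a) \<Rightarrow> int \<Rightarrow> bool" where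
  "circle_map_degree C h d \<longleftrightarrow>
     (\<exists>\<phi> \<psi>. homeomorphic_maps (nsphere 1) (top_of_set C) \<phi> \<psi>) \<and>
     (\<forall>\<phi> \<psi>. homeomorphic_maps (nsphere 1) (top_of_set C) \<phi> \<psi> \<longrightarrow>
        Brouwer_degree2 1 (\<psi> \<circ> h \<circ> \<phi>) = d)"

definition strictly_convex_set :: "'a::real_normed_vector set \<Rightarrow> bool" where
  "strictly_convex_set Y \<longleftrightarrow>
     (\<forall>y\<in>Y. \<forall>y'\<in>Y. \<forall>t::real. 0 < t \<and> t < 1 \<longrightarrow> t *\<^sub>R y + (1 - t) *\<^sub>R y' \<in> interior Y)"

end

theory Submission
  imports Defs
begin

text \<open>Only two facts about \<open>h\<close> matter: \<open>C\<close> is a topological circle and \<open>h\<close> moves every point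
  of \<open>C\<close>; strict convexity and the normality condition merely make \<open>h\<close> well defined.
  A fixed-point-free self-map \<open>F\<close> of the unit circle is never antipodal to the identity, so
  the straight-line homotopy (pushed back onto the circle) joins it to \<open>-id\<close>, and on the circle
  \<open>-id\<close> is a rotation, hence homotopic to \<open>id\<close>.  So \<open>h\<close> has degree 1, and a map of
  nonzero degree is surjective.\<close>

lemma zero_notin_closed_segment_unit_vectors:
  fixes a b :: "'a::real_normed_vector"
  assumes "norm a = 1" "norm b = 1" "a \<noteq> - b"
  shows "0 \<notin> closed_segment a b"
proof
  assume "0 \<in> closed_segment a b"
  then obtain u where u: "0 \<le> u" "u \<le> 1" and sum0: "(1 - u) *\<^sub>R a + u *\<^sub>R b = 0"
    by (auto simp: closed_segment_def)
  then have "norm ((1 - u) *\<^sub>R a) = norm (u *\<^sub>R b)"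
    by (metis add_eq_0_iff norm_minus_cancel)
  with u assms have "u = 1/2" by simp
  with sum0 have "a + b = 0" by (simp flip: scaleR_right_distrib)
  with assms(3) show False by (simp add: eq_neg_iff_add_eq_0)
qed

lemma homotopic_non_antipodal_sphere_maps:
  fixes f g :: "'a::topological_space \<Rightarrow> 'b::real_normed_vector"
  assumes "continuous_on S f" "continuous_on S g"
    and f_sphere: "f ` S \<subseteq> sphere 0 1" and g_sphere: "g ` S \<subseteq> sphere 0 1"
    and non_antipodal: "\<And>x. x \<in> S \<Longrightarrow> f x \<noteq> - g x"
  shows "homotopic_with_canon (\<lambda>_. True) S (sphere 0 1) f g"
proof -
  have "homotopic_with_canon (\<lambda>_. True) S (- {0}) f g"
  proof (rule homotopic_with_linear[OF assms(1,2)])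
    fix x assume "x \<in> S"
    with assms have "0 \<notin> closed_segment (f x) (g x)"
      by (intro zero_notin_closed_segment_unit_vectors) auto
    then show "closed_segment (f x) (g x) \<subseteq> - {0}" by auto
  qed
  then have "homotopic_with_canon (\<lambda>_. True) S (sphere 0 1) (sgn \<circ> f) (sgn \<circ> g)"
    by (rule homotopic_with_compose_continuous_left)
       (auto intro!: continuous_intros simp: norm_sgn)
  then show ?thesis
    by (rule homotopic_with_eq) (use f_sphere g_sphere in \<open>auto simp: sgn_div_norm\<close>)
qed

lemma homotopic_fixpoint_free_circle_map_id:
  fixes F :: "complex \<Rightarrow> complex"
  assumes "continuous_on (sphere 0 1) F" "F ` sphere 0 1 \<subseteq> sphere 0 1"
    and fixpoint_free: "\<And>z. z \<in> sphere 0 1 \<Longrightarrow> F z \<noteq> z"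
  shows "homotopic_with_canon (\<lambda>_. True) (sphere 0 1) (sphere 0 1) F id"
proof -
  let ?S = "sphere (0::complex) 1"
  note homotopic_with_trans[trans]
  have "homotopic_with_canon (\<lambda>_. True) ?S ?S F uminus"
    using assms by (intro homotopic_non_antipodal_sphere_maps) (auto intro!: continuous_intros)
  \<comment> \<open>\<open>-id\<close> and \<open>id\<close> are antipodal, so go through the quarter turn\<close>
  also have "homotopic_with_canon (\<lambda>_. True) ?S ?S uminus (\<lambda>z. \<i> * z)"
    by (intro homotopic_non_antipodal_sphere_maps)
       (auto intro!: continuous_intros simp: norm_mult complex_eq_iff cmod_def)
  also have "homotopic_with_canon (\<lambda>_. True) ?S ?S (\<lambda>z. \<i> * z) id"
    by (intro homotopic_non_antipodal_sphere_maps)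
       (auto intro!: continuous_intros simp: norm_mult complex_eq_iff cmod_def)
  finally show ?thesis .
qed

lemma nsphere_1_homeomorphic_circle:
  "nsphere 1 homeomorphic_space top_of_set (sphere (0::complex) 1)"
proof -
  have "pairwise orthogonal (Basis::complex set)"
    by (auto simp: pairwise_def orthogonal_def inner_not_same_Basis)
  then obtain e :: "(nat \<Rightarrow> real) \<Rightarrow> complex" and e'
    where "homeomorphic_maps (nsphere (2 - 1)) (top_of_set (sphere 0 1 \<inter> span Basis)) e e'"
    using homeomorphic_maps_nsphere_euclidean_sphere[of "Basis::complex set" 2] independent_Basis
    by auto
  then show ?thesis by (auto simp: homeomorphic_space_def)
qed

lemma
  assumes "homeomorphic_maps X Y \<phi> \<psi>" and h: "continuous_map Y Y h"
  shows continuous_map_conjugate: "continuous_map X X (\<psi> \<circ> h \<circ> \<phi>)"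
    and fixpoint_conjugate_iff: "(\<exists>x\<in>topspace X. (\<psi> \<circ> h \<circ> \<phi>) x = x) \<longleftrightarrow> (\<exists>y\<in>topspace Y. h y = y)"
    and surj_conjugate_iff: "(\<psi> \<circ> h \<circ> \<phi>) ` topspace X = topspace X \<longleftrightarrow> h ` topspace Y = topspace Y"
proof -
  have \<phi>: "homeomorphic_map X Y \<phi>" and \<psi>: "homeomorphic_map Y X \<psi>"
    and \<psi>\<phi>: "\<And>x. x \<in> topspace X \<Longrightarrow> \<psi> (\<phi> x) = x"
    and \<phi>\<psi>: "\<And>y. y \<in> topspace Y \<Longrightarrow> \<phi> (\<psi> y) = y"
    using assms(1) by (auto simp: homeomorphic_maps_map)
  have \<phi>_onto: "\<phi> ` topspace X = topspace Y" and \<psi>_onto: "\<psi> ` topspace Y = topspace X"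
    using \<phi> \<psi> by (simp_all add: homeomorphic_imp_surjective_map)
  have h_into: "h ` topspace Y \<subseteq> topspace Y"
    using h by (rule continuous_map_image_subset_topspace)
  show "continuous_map X X (\<psi> \<circ> h \<circ> \<phi>)"
    using \<phi> \<psi> h by (meson continuous_map_compose homeomorphic_imp_continuous_map)
  show "(\<exists>x\<in>topspace X. (\<psi> \<circ> h \<circ> \<phi>) x = x) \<longleftrightarrow> (\<exists>y\<in>topspace Y. h y = y)"
  proof
    assume "\<exists>x\<in>topspace X. (\<psi> \<circ> h \<circ> \<phi>) x = x"
    then obtain x where x: "x \<in> topspace X" and "\<psi> (h (\<phi> x)) = x" by auto
    then have "\<phi> (\<psi> (h (\<phi> x))) = \<phi> x" by simp
    moreover have "h (\<phi> x) \<in> topspace Y" using x \<phi>_onto h_into by blast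
    ultimately have "h (\<phi> x) = \<phi> x" by (simp add: \<phi>\<psi>)
    with x \<phi>_onto show "\<exists>y\<in>topspace Y. h y = y" by blast
  next
    assume "\<exists>y\<in>topspace Y. h y = y"
    then obtain y where "y \<in> topspace Y" "h y = y" by blast
    with \<psi>_onto \<phi>\<psi> show "\<exists>x\<in>topspace X. (\<psi> \<circ> h \<circ> \<phi>) x = x"
      by (intro bexI[of _ "\<psi> y"]) auto
  qed
  have "(\<psi> \<circ> h \<circ> \<phi>) ` topspace X = \<psi> ` h ` topspace Y"
    by (simp add: image_comp flip: \<phi>_onto)
  with \<psi>_onto h_into homeomorphic_imp_injective_map[OF \<psi>]
  show "(\<psi> \<circ> h \<circ> \<phi>) ` topspace X = topspace X \<longleftrightarrow> h ` topspace Y = topspace Y"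
    by (metis inj_on_image_eq_iff order_refl)
qed

lemma Brouwer_degree2_fixpoint_free_nsphere_1:
  assumes g: "continuous_map (nsphere 1) (nsphere 1) g"
    and fixpoint_free: "\<And>x. x \<in> topspace (nsphere 1) \<Longrightarrow> g x \<noteq> x"
  shows "Brouwer_degree2 1 g = 1"
proof -
  let ?S = "sphere (0::complex) 1"
  obtain e e' where e: "homeomorphic_maps (nsphere 1) (top_of_set ?S) e e'"
    using nsphere_1_homeomorphic_circle unfolding homeomorphic_space_def by blast
  then have e': "homeomorphic_maps (top_of_set ?S) (nsphere 1) e' e"
    by (rule homeomorphic_maps_sym[THEN iffD1])
  define F where "F = e \<circ> g \<circ> e'"
  have "continuous_map (top_of_set ?S) (top_of_set ?S) F"
    unfolding F_def using e' g by (rule continuous_map_conjugate)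
  moreover have "\<not> (\<exists>z\<in>topspace (top_of_set ?S). F z = z)"
    unfolding F_def fixpoint_conjugate_iff[OF e' g] using fixpoint_free by blast
  ultimately have "homotopic_with_canon (\<lambda>_. True) ?S ?S F id"
    by (intro homotopic_fixpoint_free_circle_map_id) (auto simp: image_subset_iff)
  moreover have "continuous_map (nsphere 1) (top_of_set ?S) e"
    and "continuous_map (top_of_set ?S) (nsphere 1) e'"
    using e by (auto simp: homeomorphic_maps_def)
  ultimately have "homotopic_with (\<lambda>_. True) (nsphere 1) (nsphere 1) (e' \<circ> F \<circ> e) (e' \<circ> id \<circ> e)"
    by (metis homotopic_with_compose_continuous_map_left homotopic_with_compose_continuous_map_right)
  moreover have "e' (e x) = x" if "x \<in> topspace (nsphere 1)" for x
    using e that unfolding homeomorphic_maps_def by blast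
  moreover have "g x \<in> topspace (nsphere 1)" if "x \<in> topspace (nsphere 1)" for x
    using continuous_map_image_subset_topspace[OF g] that by blast
  ultimately have "homotopic_with (\<lambda>_. True) (nsphere 1) (nsphere 1) g id"
    by (elim homotopic_with_eq) (simp_all add: F_def)
  then show ?thesis
    by (simp add: Brouwer_degree2_homotopic)
qed

lemma circle_map_degree_fixpoint_free:
  assumes "C homeomorphic sphere (0::complex) 1"
    and "continuous_on C h" "h ` C \<subseteq> C"
    and fixpoint_free: "\<And>c. c \<in> C \<Longrightarrow> h c \<noteq> c"
  shows "circle_map_degree C h 1"
  unfolding circle_map_degree_def
proof (intro conjI allI impI)
  have "top_of_set C homeomorphic_space nsphere 1"
    using assms(1) nsphere_1_homeomorphic_circle
    by (metis homeomorphic_space_iff_homeomorphic homeomorphic_space_sym homeomorphic_space_trans)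
  then show "\<exists>\<phi> \<psi>. homeomorphic_maps (nsphere 1) (top_of_set C) \<phi> \<psi>"
    by (metis homeomorphic_space_def homeomorphic_space_sym)
  fix \<phi> \<psi> assume \<phi>\<psi>: "homeomorphic_maps (nsphere 1) (top_of_set C) \<phi> \<psi>"
  have h: "continuous_map (top_of_set C) (top_of_set C) h"
    using assms(2,3) by (simp add: image_subset_iff)
  show "Brouwer_degree2 1 (\<psi> \<circ> h \<circ> \<phi>) = 1"
  proof (rule Brouwer_degree2_fixpoint_free_nsphere_1)
    show "continuous_map (nsphere 1) (nsphere 1) (\<psi> \<circ> h \<circ> \<phi>)"
      using \<phi>\<psi> h by (rule continuous_map_conjugate)
    show "(\<psi> \<circ> h \<circ> \<phi>) x \<noteq> x" if "x \<in> topspace (nsphere 1)" for x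
      using fixpoint_conjugate_iff[OF \<phi>\<psi> h] fixpoint_free that by auto
  qed
qed

lemma circle_map_degree_nonzero_imp_surj:
  assumes "circle_map_degree C h d" "d \<noteq> 0"
    and "continuous_on C h" "h ` C \<subseteq> C"
  shows "h ` C = C"
proof -
  obtain \<phi> \<psi> where \<phi>\<psi>: "homeomorphic_maps (nsphere 1) (top_of_set C) \<phi> \<psi>"
    and "Brouwer_degree2 1 (\<psi> \<circ> h \<circ> \<phi>) \<noteq> 0"
    using assms(1,2) unfolding circle_map_degree_def by blast
  moreover have h: "continuous_map (top_of_set C) (top_of_set C) h"
    using assms(3,4) by (simp add: image_subset_iff)
  ultimately have "(\<psi> \<circ> h \<circ> \<phi>) ` topspace (nsphere 1) = topspace (nsphere 1)"
    using Brouwer_degree2_nonsurjective continuous_map_conjugate by blast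
  then show ?thesis
    using surj_conjugate_iff[OF \<phi>\<psi> h] by simp
qed

lemma simple_path_if_inj_on_half_open:
  assumes "path g" and loop: "g 1 = g 0" and inj: "inj_on g {0..<1}"
  shows "simple_path g"
  unfolding simple_path_def loop_free_def
proof (intro conjI ballI impI assms(1))
  fix x y :: real
  assume x: "x \<in> {0..1}" and y: "y \<in> {0..1}" and eq: "g x = g y"
  define r where "r t = (if t = 1 then 0 else t)" for t :: real
  have "r x \<in> {0..<1}" "r y \<in> {0..<1}" "g (r x) = g (r y)"
    using x y eq loop by (auto simp: r_def)
  then have "r x = r y"
    using inj by (auto dest: inj_onD)
  then show "x = y \<or> x = 0 \<and> y = 1 \<or> x = 1 \<and> y = 0"
    by (auto simp: r_def split: if_splits)
qed

theorem lemma6p3: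
  fixes Y :: "(real^2) set" and C :: "(real^2) set"
    and \<gamma> \<gamma>' :: "real \<Rightarrow> real^2" and h :: "real^2 \<Rightarrow> real^2"
  assumes Y_sc: "strictly_convex_set Y"
    and C_def: "C = frontier Y"
    and \<gamma>_periodic: "\<And>t. \<gamma> (t + 1) = \<gamma> t"
    and \<gamma>_inj: "inj_on \<gamma> {0..<1}"
    and \<gamma>_img: "\<gamma> ` {0..1} = C"
    and \<gamma>_deriv: "\<And>t. (\<gamma> has_vector_derivative \<gamma>' t) (at t)"
    and \<gamma>_regular: "\<And>t. \<gamma>' t \<noteq> 0"
    and h_in: "\<And>t. h (\<gamma> t) \<in> C - {\<gamma> t}"
    and h_normal: "\<And>t. (h (\<gamma> t) - \<gamma> t) \<bullet> \<gamma>' t = 0"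
    and h_cont: "continuous_on C h"
  shows "circle_map_degree C h 1 \<and> h ` C = C"
proof -
  have h_C: "h ` C \<subseteq> C" and fixpoint_free: "\<And>c. c \<in> C \<Longrightarrow> h c \<noteq> c"
    using h_in \<gamma>_img by force+
  have loop: "\<gamma> 1 = \<gamma> 0"
    using \<gamma>_periodic[of 0] by simp
  have "path \<gamma>"
    unfolding path_def
    by (rule continuous_on_vector_derivative) (use \<gamma>_deriv has_vector_derivative_at_within in blast)
  then have "simple_path \<gamma>"
    using loop \<gamma>_inj by (rule simple_path_if_inj_on_half_open)
  then have "path_image \<gamma> homeomorphic sphere (0::complex) 1"
    by (rule homeomorphic_simple_path_image_circle) (simp_all add: pathstart_def pathfinish_def loop)
  then have "C homeomorphic sphere (0::complex) 1"
    by (simp add: path_image_def \<gamma>_img)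
  then have degree: "circle_map_degree C h 1"
    using h_cont h_C fixpoint_free by (rule circle_map_degree_fixpoint_free)
  moreover have "h ` C = C"
    using circle_map_degree_nonzero_imp_surj[OF degree _ h_cont h_C] by simp
  ultimately show ?thesis ..
qed

end
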